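(* Let $K$ be a field and $X$ a finite connected poset. The center $Z$ of the Lie algebra $(J(I(X,K)),[\ ,\ ])$ is $$Z=\mathrm{span}_K\{e_{xy}: x<y,\ x\text{ is minimal in }X\text{ and } y \text{ is maximal in }X\}.$$
   Context: $I(X,K)$ is the incidence algebra: functions $f:X\times X\to K$ with $f(x,y)=0$ unless $x\le y$, product $(fg)(x,y)=\sum_{x\le t\le y}f(x,t)g(t,y)$; $e_{xy}$ ($x\le y$) is the function equal to $1$ at $(x,y)$ and $0$ elsewhere. $J(I(X,K))=\mathrm{span}_K\{e_{xy}:x<y\}$ is the Jacobson radical, and $[f,g]=fg-gf$. Connected means any two elements are joined by a sequence in which consecutive elements are in a covering relation. *)

theory Defs
  imports Main
begin

text \<open>A poset is a finite carrier set X of a type with a partial order;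
  elements of the incidence algebra I(X,K) are functions X x X -> K,
  represented as functions 'a => 'a => 'k vanishing outside {(x,y). x,y in X, x <= y}.\<close>

definition unit_fn :: "'a \<times> 'a \<Rightarrow> 'a \<Rightarrow> 'a \<Rightarrow> 'k::field" where
  "unit_fn p = (\<lambda>u v. if (u, v) = p then 1 else 0)"

definition K_span :: "('a \<times> 'a) set \<Rightarrow> ('a \<Rightarrow> 'a \<Rightarrow> 'k::field) set" where
  "K_span S = {f. \<exists>c :: 'a \<times> 'a \<Rightarrow> 'k. f = (\<lambda>u v. \<Sum>p\<in>S. c p * unit_fn p u v)}"

definition inc_mult :: "'a::order set \<Rightarrow> ('a \<Rightarrow> 'a \<Rightarrow> 'k::field) \<Rightarrow> ('a \<Rightarrow> 'a \<Rightarrow> 'k) \<Rightarrow> 'a \<Rightarrow> 'a \<Rightarrow> 'k" where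
  "inc_mult X f g = (\<lambda>x y. if x \<in> X \<and> y \<in> X \<and> x \<le> y
      then (\<Sum>t\<in>{t\<in>X. x \<le> t \<and> t \<le> y}. f x t * g t y) else 0)"

definition inc_bracket :: "'a::order set \<Rightarrow> ('a \<Rightarrow> 'a \<Rightarrow> 'k::field) \<Rightarrow> ('a \<Rightarrow> 'a \<Rightarrow> 'k) \<Rightarrow> 'a \<Rightarrow> 'a \<Rightarrow> 'k" where
  "inc_bracket X f g = (\<lambda>x y. inc_mult X f g x y - inc_mult X g f x y)"

definition jacobson_rad :: "'a::order set \<Rightarrow> ('a \<Rightarrow> 'a \<Rightarrow> 'k::field) set" where
  "jacobson_rad X = K_span {(x, y). x \<in> X \<and> y \<in> X \<and> x < y}"

definition lie_center :: "'a::order set \<Rightarrow> ('a \<Rightarrow> 'a \<Rightarrow> 'k::field) set" where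
  "lie_center X = {f \<in> jacobson_rad X. \<forall>g \<in> jacobson_rad X. inc_bracket X f g = (\<lambda>_ _. 0)}"

definition minimal_in :: "'a::order set \<Rightarrow> 'a \<Rightarrow> bool" where
  "minimal_in X x \<longleftrightarrow> x \<in> X \<and> \<not> (\<exists>z\<in>X. z < x)"

definition maximal_in :: "'a::order set \<Rightarrow> 'a \<Rightarrow> bool" where
  "maximal_in X x \<longleftrightarrow> x \<in> X \<and> \<not> (\<exists>z\<in>X. x < z)"

definition covers_in :: "'a::order set \<Rightarrow> 'a \<Rightarrow> 'a \<Rightarrow> bool" where
  "covers_in X x y \<longleftrightarrow> x \<in> X \<and> y \<in> X \<and> x < y \<and> \<not> (\<exists>z\<in>X. x < z \<and> z < y)"

definition connected_poset :: "'a::order set \<Rightarrow> bool" where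
  "connected_poset X \<longleftrightarrow> (\<forall>x\<in>X. \<forall>y\<in>X.
     (\<lambda>a b. covers_in X a b \<or> covers_in X b a)\<^sup>*\<^sup>* x y)"

end

theory Submission
  imports Defs
begin

text \<open>If f is central in J and f(u,v) \<noteq> 0, then v is maximal: otherwise, for v < w,
  the bracket [f, e_vw] has the entry f(u,v) at (u,w), because e_vw f vanishes there
  (u \<noteq> v). Dually u is minimal, using e_wu for w < u. Conversely, if f is supported on
  pairs (minimal, maximal), then both fg and gf vanish for every strictly upper triangular g,
  since nothing lies strictly above a maximal element or strictly below a minimal one.\<close>

lemma K_span_eq_supported:
  assumes "finite S"
  shows "(K_span S :: ('a \<Rightarrow> 'a \<Rightarrow> 'k::field) set) = {f. \<forall>u v. f u v \<noteq> 0 \<longrightarrow> (u, v) \<in> S}"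
proof (intro set_eqI iffI)
  fix f :: "'a \<Rightarrow> 'a \<Rightarrow> 'k"
  assume "f \<in> K_span S"
  then obtain c where "f = (\<lambda>u v. \<Sum>p\<in>S. c p * unit_fn p u v)"
    unfolding K_span_def by blast
  then show "f \<in> {f. \<forall>u v. f u v \<noteq> 0 \<longrightarrow> (u, v) \<in> S}"
    by (auto simp: unit_fn_def intro!: sum.neutral)
next
  fix f :: "'a \<Rightarrow> 'a \<Rightarrow> 'k"
  assume f: "f \<in> {f. \<forall>u v. f u v \<noteq> 0 \<longrightarrow> (u, v) \<in> S}"
  have "f u v = (\<Sum>p\<in>S. case_prod f p * unit_fn p u v)" for u v
  proof -
    have "(\<Sum>p\<in>S. case_prod f p * unit_fn p u v) = (\<Sum>p\<in>S. if p = (u, v) then f u v else 0)"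
      unfolding unit_fn_def by (intro sum.cong) auto
    also have "\<dots> = f u v"
      using assms f by auto
    finally show ?thesis by simp
  qed
  then show "f \<in> K_span S"
    unfolding K_span_def by blast
qed

lemma jacobson_rad_eq_supported:
  assumes "finite X"
  shows "(jacobson_rad X :: ('a::order \<Rightarrow> 'a \<Rightarrow> 'k::field) set)
    = {f. \<forall>u v. f u v \<noteq> 0 \<longrightarrow> u \<in> X \<and> v \<in> X \<and> u < v}"
proof -
  have "finite {(x, y). x \<in> X \<and> y \<in> X \<and> x < y}"
    by (rule finite_subset[of _ "X \<times> X"]) (use assms in auto)
  then show ?thesis
    unfolding jacobson_rad_def by (simp add: K_span_eq_supported)
qed

lemma unit_fn_in_jacobson_rad:
  assumes "finite X" "v \<in> X" "w \<in> X" "v < w"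
  shows "unit_fn (v, w) \<in> jacobson_rad X"
  using assms by (auto simp: jacobson_rad_eq_supported unit_fn_def)

lemma inc_mult_unit_fn_right:
  assumes "finite X" "u \<in> X" "v \<in> X" "w \<in> X" "u \<le> v" "v \<le> w"
  shows "inc_mult X f (unit_fn (v, w)) u w = f u v"
proof -
  have "inc_mult X f (unit_fn (v, w)) u w
      = (\<Sum>t\<in>{t\<in>X. u \<le> t \<and> t \<le> w}. f u t * (if t = v then 1 else 0))"
    using assms order_trans[OF \<open>u \<le> v\<close> \<open>v \<le> w\<close>]
    by (simp add: inc_mult_def unit_fn_def)
  also have "\<dots> = (\<Sum>t\<in>{t\<in>X. u \<le> t \<and> t \<le> w}. if t = v then f u v else 0)"
    by (rule sum.cong) auto
  also have "\<dots> = f u v"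
    using assms by simp
  finally show ?thesis .
qed

lemma inc_mult_unit_fn_left:
  assumes "finite X" "w \<in> X" "u \<in> X" "v \<in> X" "w \<le> u" "u \<le> v"
  shows "inc_mult X (unit_fn (w, u)) f w v = f u v"
proof -
  have "inc_mult X (unit_fn (w, u)) f w v
      = (\<Sum>t\<in>{t\<in>X. w \<le> t \<and> t \<le> v}. (if t = u then 1 else 0) * f t v)"
    using assms order_trans[OF \<open>w \<le> u\<close> \<open>u \<le> v\<close>]
    by (simp add: inc_mult_def unit_fn_def)
  also have "\<dots> = (\<Sum>t\<in>{t\<in>X. w \<le> t \<and> t \<le> v}. if t = u then f u v else 0)"
    by (rule sum.cong) auto
  also have "\<dots> = f u v"
    using assms by simp
  finally show ?thesis .
qed

lemma inc_mult_unit_fn_left_eq_0: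
  "u \<noteq> v \<Longrightarrow> inc_mult X (unit_fn (v, w)) f u y = 0"
  by (auto simp: inc_mult_def unit_fn_def intro!: sum.neutral)

lemma inc_mult_unit_fn_right_eq_0:
  "v \<noteq> w \<Longrightarrow> inc_mult X f (unit_fn (u, w)) x v = 0"
  by (auto simp: inc_mult_def unit_fn_def intro!: sum.neutral)

lemma inc_mult_eq_0:
  assumes "\<And>x t y. f x t * g t y = 0"
  shows "inc_mult X f g = (\<lambda>_ _. 0)"
  unfolding inc_mult_def by (intro ext) (simp only: assms sum.neutral_const if_cancel)

lemma lie_center_supported_min_max:
  assumes "finite X" and f: "f \<in> lie_center X" and nz: "f u v \<noteq> 0"
  shows "u < v \<and> minimal_in X u \<and> maximal_in X v"
proof -
  have comm: "inc_bracket X f g x y = 0" if "g \<in> jacobson_rad X" for g x y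
    using f that unfolding lie_center_def by auto
  from f nz have uX: "u \<in> X" and vX: "v \<in> X" and uv: "u < v"
    by (auto simp: lie_center_def jacobson_rad_eq_supported[OF \<open>finite X\<close>])
  have "maximal_in X v"
  proof (rule ccontr)
    assume "\<not> maximal_in X v"
    then obtain w where "w \<in> X" "v < w"
      using vX unfolding maximal_in_def by auto
    then have "inc_bracket X f (unit_fn (v, w)) u w = 0"
      using \<open>finite X\<close> vX by (intro comm unit_fn_in_jacobson_rad)
    moreover have "inc_bracket X f (unit_fn (v, w)) u w = f u v"
      using \<open>finite X\<close> \<open>w \<in> X\<close> \<open>v < w\<close> uX vX uv
      by (simp add: inc_bracket_def inc_mult_unit_fn_right inc_mult_unit_fn_left_eq_0)
    ultimately show False
      using nz by simp
  qed
  moreover have "minimal_in X u"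
  proof (rule ccontr)
    assume "\<not> minimal_in X u"
    then obtain w where "w \<in> X" "w < u"
      using uX unfolding minimal_in_def by auto
    then have "inc_bracket X f (unit_fn (w, u)) w v = 0"
      using \<open>finite X\<close> uX by (intro comm unit_fn_in_jacobson_rad)
    moreover have "inc_bracket X f (unit_fn (w, u)) w v = - f u v"
      using \<open>finite X\<close> \<open>w \<in> X\<close> \<open>w < u\<close> uX vX uv
      by (simp add: inc_bracket_def inc_mult_unit_fn_left inc_mult_unit_fn_right_eq_0)
    ultimately show False
      using nz by simp
  qed
  ultimately show ?thesis
    using uv by blast
qed

lemma min_max_supported_in_lie_center:
  assumes "finite X"
    and f: "\<And>u v. f u v \<noteq> 0 \<Longrightarrow> u < v \<and> minimal_in X u \<and> maximal_in X v"
  shows "f \<in> lie_center X"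
proof -
  have fJ: "f \<in> jacobson_rad X"
    using f by (auto simp: jacobson_rad_eq_supported[OF \<open>finite X\<close>] minimal_in_def maximal_in_def)
  have "inc_bracket X f g = (\<lambda>_ _. 0)" if "g \<in> jacobson_rad X" for g
  proof -
    have g: "g u v \<noteq> 0 \<Longrightarrow> u \<in> X \<and> v \<in> X \<and> u < v" for u v
      using that by (auto simp: jacobson_rad_eq_supported[OF \<open>finite X\<close>])
    have "f x t * g t y = 0" for x t y
    proof (cases "f x t = 0")
      case False
      then have "maximal_in X t"
        using f by blast
      then have "g t y = 0"
        using g unfolding maximal_in_def by blast
      then show ?thesis by simp
    qed simp
    moreover have "g x t * f t y = 0" for x t y
    proof (cases "f t y = 0")
      case False
      then have "minimal_in X t"
        using f by blast
      then have "g x t = 0"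
        using g unfolding minimal_in_def by blast
      then show ?thesis by simp
    qed simp
    ultimately show ?thesis
      by (simp add: inc_bracket_def inc_mult_eq_0)
  qed
  with fJ show ?thesis
    unfolding lie_center_def by blast
qed

theorem proposition2p5:
  fixes X :: "'a::order set"
  assumes "finite X" and "connected_poset X"
  shows "(lie_center X :: ('a \<Rightarrow> 'a \<Rightarrow> 'k::field) set) =
         K_span {(x, y). x < y \<and> minimal_in X x \<and> maximal_in X y}"
proof -
  have "finite {(x, y). x < y \<and> minimal_in X x \<and> maximal_in X y}"
    by (rule finite_subset[of _ "X \<times> X"]) (use \<open>finite X\<close> in \<open>auto simp: minimal_in_def maximal_in_def\<close>)
  then have "(K_span {(x, y). x < y \<and> minimal_in X x \<and> maximal_in X y} :: ('a \<Rightarrow> 'a \<Rightarrow> 'k) set)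
      = {f. \<forall>u v. f u v \<noteq> 0 \<longrightarrow> u < v \<and> minimal_in X u \<and> maximal_in X v}"
    by (simp add: K_span_eq_supported)
  also have "\<dots> = lie_center X"
    using lie_center_supported_min_max[OF \<open>finite X\<close>]
      min_max_supported_in_lie_center[OF \<open>finite X\<close>]
    by blast
  finally show ?thesis ..
qed

end
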